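(* Let $(K,R,V)$ be a finite transitive Kripke tree with clusters, $A$ a modal formula, and $t$ a translation for $A$ based on a sequence $Q=\{q_i\}_{i=0}^\infty$ of atoms not occurring in $A$. Then there is a finite transitive irreflexive Kripke model $(K',R',V')$ such that for every node $k\in K$ there is a node $k'\in K'$ such that if $k\vDash A$ then $k'\vDash A^t$.
   Context: Modal formulas are built from atoms and $\bot$ using $\wedge,\vee,\to,\neg,\Box$. A finite transitive Kripke tree with clusters is a finite Kripke model with transitive accessibility relation $R$ whose clusters (maximal sets of mutually accessible nodes, or single irreflexive nodes) are ordered by $R$ as a tree; each cluster is either a single irreflexive node or a set of reflexive nodes. A translation $t$ for $A$ based on $Q$ is an assignment of natural numbers to the occurrences of $\Box$ in $A$ such that the number assigned to any box occurrence is greater than the numbers assigned to all box occurrences within its scope. $A^t$ is defined by: $p^t=p$ for atoms; $(B\circ C)^t=B^t\circ C^t$ for $\circ\in\{\wedge,\vee,\to\}$; $(\neg B)^t=\neg B^t$; $(\Box B)^t=\Box(\bigwedge_{i=0}^n q_i\to B^t)$ where $n$ is the number $t$ assigns to that box occurrence. *)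

theory Defs
  imports Main
begin

datatype 'a fm =
    Atom 'a
  | Bot
  | Conj "'a fm" "'a fm"
  | Disj "'a fm" "'a fm"
  | Imp "'a fm" "'a fm"
  | Neg "'a fm"
  | Box "'a fm"

fun atoms :: "'a fm \<Rightarrow> 'a set" where
  "atoms (Atom p) = {p}"
| "atoms Bot = {}"
| "atoms (Conj B C) = atoms B \<union> atoms C"
| "atoms (Disj B C) = atoms B \<union> atoms C"
| "atoms (Imp B C) = atoms B \<union> atoms C"
| "atoms (Neg B) = atoms B"
| "atoms (Box B) = atoms B"

text \<open>A translation t for A is represented as a copy of A in which every
  box occurrence carries the natural number assigned to it.\<close>

datatype 'a afm =
    AAtom 'a
  | ABot
  | AConj "'a afm" "'a afm"
  | ADisj "'a afm" "'a afm"
  | AImp "'a afm" "'a afm"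
  | ANeg "'a afm"
  | ABox nat "'a afm"

fun erase :: "'a afm \<Rightarrow> 'a fm" where
  "erase (AAtom p) = Atom p"
| "erase ABot = Bot"
| "erase (AConj B C) = Conj (erase B) (erase C)"
| "erase (ADisj B C) = Disj (erase B) (erase C)"
| "erase (AImp B C) = Imp (erase B) (erase C)"
| "erase (ANeg B) = Neg (erase B)"
| "erase (ABox n B) = Box (erase B)"

fun boxnums :: "'a afm \<Rightarrow> nat set" where
  "boxnums (AAtom p) = {}"
| "boxnums ABot = {}"
| "boxnums (AConj B C) = boxnums B \<union> boxnums C"
| "boxnums (ADisj B C) = boxnums B \<union> boxnums C"
| "boxnums (AImp B C) = boxnums B \<union> boxnums C"
| "boxnums (ANeg B) = boxnums B"
| "boxnums (ABox n B) = insert n (boxnums B)"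

fun admissible :: "'a afm \<Rightarrow> bool" where
  "admissible (AAtom p) = True"
| "admissible ABot = True"
| "admissible (AConj B C) = (admissible B \<and> admissible C)"
| "admissible (ADisj B C) = (admissible B \<and> admissible C)"
| "admissible (AImp B C) = (admissible B \<and> admissible C)"
| "admissible (ANeg B) = admissible B"
| "admissible (ABox n B) = (admissible B \<and> (\<forall>m\<in>boxnums B. m < n))"

definition is_translation :: "'a afm \<Rightarrow> 'a fm \<Rightarrow> bool" where
  "is_translation t A \<longleftrightarrow> erase t = A \<and> admissible t"

fun bigconj :: "(nat \<Rightarrow> 'a) \<Rightarrow> nat \<Rightarrow> 'a fm" where
  "bigconj q 0 = Atom (q 0)"
| "bigconj q (Suc n) = Conj (bigconj q n) (Atom (q (Suc n)))"

fun translate :: "(nat \<Rightarrow> 'a) \<Rightarrow> 'a afm \<Rightarrow> 'a fm" where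
  "translate q (AAtom p) = Atom p"
| "translate q ABot = Bot"
| "translate q (AConj B C) = Conj (translate q B) (translate q C)"
| "translate q (ADisj B C) = Disj (translate q B) (translate q C)"
| "translate q (AImp B C) = Imp (translate q B) (translate q C)"
| "translate q (ANeg B) = Neg (translate q B)"
| "translate q (ABox n B) = Box (Imp (bigconj q n) (translate q B))"

fun sat :: "'w set \<Rightarrow> ('w \<Rightarrow> 'w \<Rightarrow> bool) \<Rightarrow> ('w \<Rightarrow> 'a \<Rightarrow> bool) \<Rightarrow> 'w \<Rightarrow> 'a fm \<Rightarrow> bool" where
  "sat K R V k (Atom p) = V k p"
| "sat K R V k Bot = False"
| "sat K R V k (Conj B C) = (sat K R V k B \<and> sat K R V k C)"
| "sat K R V k (Disj B C) = (sat K R V k B \<or> sat K R V k C)"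
| "sat K R V k (Imp B C) = (sat K R V k B \<longrightarrow> sat K R V k C)"
| "sat K R V k (Neg B) = (\<not> sat K R V k B)"
| "sat K R V k (Box B) = (\<forall>j\<in>K. R k j \<longrightarrow> sat K R V j B)"

definition transitive_on :: "'w set \<Rightarrow> ('w \<Rightarrow> 'w \<Rightarrow> bool) \<Rightarrow> bool" where
  "transitive_on K R \<longleftrightarrow> (\<forall>x\<in>K. \<forall>y\<in>K. \<forall>z\<in>K. R x y \<longrightarrow> R y z \<longrightarrow> R x z)"

text \<open>The clusters (maximal sets
  of mutually accessible nodes, or single irreflexive nodes) are determined by R;
  by transitivity every non-singleton cluster consists of reflexive nodes.
  The clusters form a tree: there is a root cluster (containing r) from which all
  other nodes are accessible, and the strict predecessors of every node
  (nodes j with R j k but not R k j) are linearly ordered by R.\<close>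
definition kripke_tree_clusters :: "'w set \<Rightarrow> ('w \<Rightarrow> 'w \<Rightarrow> bool) \<Rightarrow> bool" where
  "kripke_tree_clusters K R \<longleftrightarrow>
     finite K \<and> K \<noteq> {} \<and>
     (\<forall>x y. R x y \<longrightarrow> x \<in> K \<and> y \<in> K) \<and>
     transitive_on K R \<and>
     (\<exists>r\<in>K. \<forall>k\<in>K. k \<noteq> r \<longrightarrow> R r k) \<and>
     (\<forall>k\<in>K. \<forall>j1\<in>K. \<forall>j2\<in>K.
        R j1 k \<and> \<not> R k j1 \<and> R j2 k \<and> \<not> R k j2 \<longrightarrow> R j1 j2 \<or> R j2 j1 \<or> j1 = j2)"

definition finite_trans_irrefl :: "'w set \<Rightarrow> ('w \<Rightarrow> 'w \<Rightarrow> bool) \<Rightarrow> bool" where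
  "finite_trans_irrefl K R \<longleftrightarrow>
     finite K \<and> transitive_on K R \<and> (\<forall>x\<in>K. \<not> R x x)"

end

theory Submission
  imports Defs
begin

text \<open>Each world k of K is split into copies (k, 0), ..., (k, N). Between worlds of
  different clusters the accessibility of K is kept, but inside a cluster one may only
  step to a strictly lower copy; this unravels every cluster into an irreflexive,
  transitive descending chain. The fresh atom q_n is made true exactly at the copies of
  level greater than n, so the guard q_0 \<and> ... \<and> q_n of a box numbered n only looks at
  levels above n. Since the boxes in its scope carry smaller numbers, the copy of level
  n + 1 of any R-successor is a legitimate witness, and an induction on A shows that
  (k, N) satisfies A^t iff k satisfies A, once N exceeds every box number by two.\<close>

lemma sat_pullback:
  assumes "g ` K' = K"
  shows "sat K' (\<lambda>x y. R (g x) (g y)) (\<lambda>x. V (g x)) x F = sat K R V (g x) F"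
  by (induction F arbitrary: x) (auto simp flip: assms)

lemma finite_trans_irrefl_pullback:
  assumes "finite_trans_irrefl K R" "finite K'" "g ` K' \<subseteq> K"
  shows "finite_trans_irrefl K' (\<lambda>x y. R (g x) (g y))"
  using assms unfolding finite_trans_irrefl_def transitive_on_def
  by (simp add: image_subset_iff) blast

lemma finite_trans_irrefl_nat_copy:
  fixes K :: "'w set"
  assumes "finite_trans_irrefl K R"
  obtains K' :: "nat set" and R' f V' where "finite_trans_irrefl K' R'" "f ` K \<subseteq> K'"
    "\<And>k F. k \<in> K \<Longrightarrow> sat K' R' V' (f k) F = sat K R V k F"
proof -
  have "finite K" using assms by (simp add: finite_trans_irrefl_def)
  then obtain f :: "'w \<Rightarrow> nat" where f: "inj_on f K"
    using finite_imp_inj_to_nat_seg by blast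
  let ?g = "inv_into K f"
  have g: "?g ` f ` K = K" using f by simp
  have frame: "finite_trans_irrefl (f ` K) (\<lambda>x y. R (?g x) (?g y))"
    using assms by (rule finite_trans_irrefl_pullback) (simp_all add: \<open>finite K\<close> f)
  have sat_relabel:
    "sat (f ` K) (\<lambda>x y. R (?g x) (?g y)) (\<lambda>x. V (?g x)) (f k) F = sat K R V k F"
    if "k \<in> K" for k F
    using sat_pullback[where R = R and V = V, OF g] f that by simp
  show ?thesis by (rule that[OF frame _ sat_relabel]) simp_all
qed

definition unravel :: "('w \<Rightarrow> 'w \<Rightarrow> bool) \<Rightarrow> 'w \<times> nat \<Rightarrow> 'w \<times> nat \<Rightarrow> bool" where
  "unravel R x y \<longleftrightarrow> R (fst x) (fst y) \<and> (R (fst y) (fst x) \<longrightarrow> snd y < snd x)"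

definition level_val :: "(nat \<Rightarrow> 'a) \<Rightarrow> ('w \<Rightarrow> 'a \<Rightarrow> bool) \<Rightarrow> 'w \<times> nat \<Rightarrow> 'a \<Rightarrow> bool" where
  "level_val q V x p = (if p \<in> range q then inv q p < snd x else V (fst x) p)"

lemma finite_trans_irrefl_unravel:
  assumes "finite K" "finite I" "transitive_on K R"
  shows "finite_trans_irrefl (K \<times> I) (unravel R)"
  unfolding finite_trans_irrefl_def
proof (intro conjI ballI)
  have trans: "R a c" if "a \<in> K" "b \<in> K" "c \<in> K" "R a b" "R b c" for a b c
    using assms(3) that unfolding transitive_on_def by blast
  show "transitive_on (K \<times> I) (unravel R)"
    unfolding transitive_on_def
  proof (clarify)
    fix a i b j c l
    assume "a \<in> K" "b \<in> K" "c \<in> K" "unravel R (a, i) (b, j)" "unravel R (b, j) (c, l)"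
    then show "unravel R (a, i) (c, l)"
      using trans[of a b c] trans[of b c a] trans[of c a b] unfolding unravel_def by auto
  qed
qed (use assms in \<open>auto simp: unravel_def\<close>)

lemma sat_bigconj_level:
  assumes "inj q"
  shows "sat W R (level_val q V) x (bigconj q n) \<longleftrightarrow> n < snd x"
  by (induction n) (auto simp: level_val_def inv_f_f[OF assms])

lemma sat_translate_unravel:
  assumes "inj q"
  shows "admissible B \<Longrightarrow> \<forall>j. q j \<notin> atoms (erase B) \<Longrightarrow> k \<in> K \<Longrightarrow> i \<le> N \<Longrightarrow>
    \<forall>m\<in>boxnums B. Suc m < i \<Longrightarrow>
    sat (K \<times> {..N}) (unravel R) (level_val q V) (k, i) (translate q B) \<longleftrightarrow> sat K R V k (erase B)"
proof (induction B arbitrary: k i)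
  case (ABox n C)
  let ?W = "K \<times> {..N}" and ?V = "level_val q V"
  have IH: "sat ?W (unravel R) ?V (j, l) (translate q C) \<longleftrightarrow> sat K R V j (erase C)"
    if "j \<in> K" "l \<le> N" "n < l" for j l
    using ABox that by (intro ABox.IH) auto
  have "sat ?W (unravel R) ?V (k, i) (translate q (ABox n C)) \<longleftrightarrow>
      (\<forall>(j, l)\<in>?W. unravel R (k, i) (j, l) \<longrightarrow> n < l \<longrightarrow> sat ?W (unravel R) ?V (j, l) (translate q C))"
    by (auto simp: sat_bigconj_level[OF assms])
  also have "\<dots> \<longleftrightarrow> (\<forall>j\<in>K. R k j \<longrightarrow> sat K R V j (erase C))"
  proof
    assume below: "\<forall>(j, l)\<in>?W. unravel R (k, i) (j, l) \<longrightarrow> n < l \<longrightarrow>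
      sat ?W (unravel R) ?V (j, l) (translate q C)"
    show "\<forall>j\<in>K. R k j \<longrightarrow> sat K R V j (erase C)"
    proof (intro ballI impI)
      fix j assume j: "j \<in> K" "R k j"
      have "Suc n < i" "i \<le> N" using ABox.prems by auto
      then have "sat ?W (unravel R) ?V (j, Suc n) (translate q C)"
        using below j by (auto simp: unravel_def)
      then show "sat K R V j (erase C)" using IH[of j "Suc n"] j \<open>Suc n < i\<close> \<open>i \<le> N\<close> by simp
    qed
  qed (auto simp: unravel_def IH)
  finally show ?case by simp
qed (auto simp: level_val_def)

theorem lemma4p4:
  fixes K :: "'w set" and R :: "'w \<Rightarrow> 'w \<Rightarrow> bool" and V :: "'w \<Rightarrow> 'a \<Rightarrow> bool"
    and A :: "'a fm" and t :: "'a afm" and q :: "nat \<Rightarrow> 'a"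
  assumes "kripke_tree_clusters K R"
    and "is_translation t A"
    and "inj q"
    and "\<forall>i. q i \<notin> atoms A"
  shows "\<exists>(K' :: nat set) R' (V' :: nat \<Rightarrow> 'a \<Rightarrow> bool).
           finite_trans_irrefl K' R' \<and>
           (\<forall>k\<in>K. \<exists>k'\<in>K'. sat K R V k A \<longrightarrow> sat K' R' V' k' (translate q t))"
proof -
  have t: "erase t = A" "admissible t" using assms(2) by (auto simp: is_translation_def)
  have "finite (boxnums t)" by (induction t) auto
  define N where "N = Suc (Suc (Max (insert 0 (boxnums t))))"
  have N: "\<forall>m\<in>boxnums t. Suc m < N"
    using \<open>finite (boxnums t)\<close> by (auto simp: N_def le_imp_less_Suc)
  have "finite_trans_irrefl (K \<times> {..N}) (unravel R)"
    using assms(1) by (intro finite_trans_irrefl_unravel) (auto simp: kripke_tree_clusters_def)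
  then obtain K' :: "nat set" and R' f and V' :: "nat \<Rightarrow> 'a \<Rightarrow> bool"
    where copy: "finite_trans_irrefl K' R'" "f ` (K \<times> {..N}) \<subseteq> K'"
      and sat_copy: "\<And>x F. x \<in> K \<times> {..N} \<Longrightarrow>
        sat K' R' V' (f x) F = sat (K \<times> {..N}) (unravel R) (level_val q V) x F"
    by (rule finite_trans_irrefl_nat_copy[where V = "level_val q V"]) blast
  have "sat K' R' V' (f (k, N)) (translate q t) \<longleftrightarrow> sat K R V k A" if "k \<in> K" for k
    using that assms(3,4) t N by (simp add: sat_copy sat_translate_unravel)
  then show ?thesis using copy by blast
qed

end
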